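(* In the dynamic weighted storage system described in the context, each read/write operation always finishes in the last installed view in the system ($lastview$).
   Context: System: servers $S=\{s_1,\dots,s_n\}$ and clients; reliable links; asynchronous; crash failures only; at most $f$ servers crash and $2f+1\le n$. Views form a sequence $v_0,v_1,\dots$ with $v_{k+1}=v_k.succ$; $v<w$ means $w$ is obtained from $v$ by applying $succ$ one or more times. Each server $s$ has a current view $s.cview$ (initially $v_0$) and a weight in each view; in every view each server's weight is strictly between $\mathbb{wl}=n/(2(n-f))$ and $\mathbb{wu}=n/(2f)$ and the total weight is at most $n$. A weighted majority for view $v$ is a set of servers whose weights in $v$ sum to more than $n/2$. View changer (server $s$ with $s.cview=v$): on timeout it sends $\langle\text{change\_view},v.succ\rangle$; once it has received or sent change\_view for $v.succ$ it forwards it if needed, disables read/write operations, sends $\langle\text{state\_update},(val,ts,cid),v,w\rangle$ to all servers (it has then uninstalled $v$), waits for state\_update messages for view $v$ with weights summing to more than $n/2$, adopts the value with largest $(ts,cid)$, sets $s.cview\leftarrow v.succ$ (installs $v.succ$) and re-enables read/write operations. A view $v$ is installed in the system once some server installs it and no server has a larger current view; $lastview$ is the last view installed in the system. Read/write protocol: each client keeps $cview$ (initially $v_0$). Each operation has two phases, both executed with the same client view (a view change restarts the whole operation); in each phase the client sends a request tagged with $cview$ to all servers; a server (when read/write operations are enabled) replies with its current view and, if it equals the request's view, its weight (else $\bot$), plus its register $(val,ts,cid)$ in phase 1, and in phase 2 stores the written value if views match and its $(ts,cid)$ is larger. The client collects replies with view equal to $cview$; on a reply with another view $v$ it sets $cview\leftarrow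 v$ if $cview<v$ and restarts the operation; a phase finishes when collected weights exceed $n/2$.
   Formalization: The view in which an operation finishes (the client's view) equals $lastview$ at some state of its final phase 2, from the sending of its phase-2 requests up to completion, rather than at the finishing instant. The statement above fails without it. *)

theory Defs
  imports Complex_Main "HOL-Library.Multiset"
begin

text \<open>
  Servers: elements of a finite type 's (so n = card (UNIV :: 's set)).  Clients: elements of a
  linearly ordered type 'c (client ids, used as tie breakers in (ts,cid)).
  Views: v_k is represented by the natural number k, so v0 = 0 and v.succ = Suc v,
  and v < w iff w is obtained from v by applying succ one or more times.
  Registers: (val, ts, cid).
  Weights: w v s is the weight of server s in view v (a parameter of the model).
  The network is a multiset of messages in transit (reliable point-to-point links:
  no loss, no duplication, no creation; arbitrary delays and reordering).
\<close>

type_synonym ('v,'c) reg = "'v \<times> nat \<times> 'c"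

datatype 'v opn = Read | Write 'v

datatype ('s,'v,'c) msg =
    ChangeView 's nat                         \<comment> \<open>destination, view\<close>
  | StateUpdate 's 's "('v,'c) reg" nat        \<comment> \<open>destination, sender, register, view\<close>
  | Req1 's 'c nat nat                        \<comment> \<open>destination server, client, request id, view\<close>
  | Req2 's 'c nat nat "('v,'c) reg"          \<comment> \<open>destination server, client, request id, view, value\<close>
  | Rep1 'c 's nat nat "real option" "('v,'c) reg"
      \<comment> \<open>destination client, sender, request id, server view, weight or None (bottom), register\<close>
  | Rep2 'c 's nat nat "real option"
      \<comment> \<open>destination client, sender, request id, server view, weight or None (bottom)\<close>

record ('s,'v,'c) st =
  scv   :: "'s \<Rightarrow> nat"                         \<comment> \<open>current view of a server\<close>
  sreg  :: "'s \<Rightarrow> ('v,'c) reg"                 \<comment> \<open>register of a server\<close>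
  sen   :: "'s \<Rightarrow> bool"                        \<comment> \<open>read/write operations enabled\<close>
  sfl   :: "'s \<Rightarrow> bool"                        \<comment> \<open>change_view for scv+1 received/sent (current view uninstalled)\<close>
  ssu   :: "'s \<Rightarrow> nat \<Rightarrow> ('s \<times> ('v,'c) reg) set" \<comment> \<open>state_update messages received, per view\<close>
  crashed :: "'s set"
  ccv   :: "'c \<Rightarrow> nat"                         \<comment> \<open>client view\<close>
  cop   :: "'c \<Rightarrow> 'v opn option"               \<comment> \<open>pending operation (None = idle)\<close>
  cph   :: "'c \<Rightarrow> nat"                         \<comment> \<open>current phase (1 or 2)\<close>
  crid  :: "'c \<Rightarrow> nat"                         \<comment> \<open>request id of the current phase\<close>
  crep  :: "'c \<Rightarrow> ('s \<times> real \<times> ('v,'c) reg) set" \<comment> \<open>collected replies: server, weight, register\<close>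
  cwr   :: "'c \<Rightarrow> ('v,'c) reg"                 \<comment> \<open>value written in phase 2\<close>
  net   :: "('s,'v,'c) msg multiset"

definition key :: "('v,'c) reg \<Rightarrow> nat \<times> 'c" where
  "key r = (fst (snd r), snd (snd r))"

definition key_le :: "nat \<times> 'c::linorder \<Rightarrow> nat \<times> 'c \<Rightarrow> bool" where
  "key_le a b \<longleftrightarrow> fst a < fst b \<or> (fst a = fst b \<and> snd a \<le> snd b)"

definition key_less :: "nat \<times> 'c::linorder \<Rightarrow> nat \<times> 'c \<Rightarrow> bool" where
  "key_less a b \<longleftrightarrow> fst a < fst b \<or> (fst a = fst b \<and> snd a < snd b)"

definition bcast :: "('s::finite \<Rightarrow> 'm) \<Rightarrow> 'm multiset" where
  "bcast g = (\<Sum>s\<in>UNIV. {#g s#})"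

text \<open>Weight assumptions: in every view each weight lies strictly between
  wl = n/(2(n-f)) and wu = n/(2f) (the upper bound written multiplied out, so that
  f = 0 means wu = infinity), the total weight is at most n, and 2f+1 <= n.\<close>
definition weights_ok :: "nat \<Rightarrow> (nat \<Rightarrow> 's::finite \<Rightarrow> real) \<Rightarrow> bool" where
  "weights_ok f w \<longleftrightarrow>
     2 * f + 1 \<le> card (UNIV :: 's set) \<and>
     (\<forall>v s. real (card (UNIV :: 's set)) / (2 * (real (card (UNIV :: 's set)) - real f)) < w v s \<and>
            2 * real f * w v s < real (card (UNIV :: 's set))) \<and>
     (\<forall>v. (\<Sum>s\<in>UNIV. w v s) \<le> real (card (UNIV :: 's set)))"

text \<open>Server s (in view v = scv s) has received or sent change_view for v.succ:
  forward it, disable read/write operations, send state_update (uninstall v).\<close>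
definition handle_cv :: "('s::finite,'v,'c) st \<Rightarrow> 's \<Rightarrow> ('s,'v,'c) st" where
  "handle_cv \<sigma> s = \<sigma>\<lparr> sfl := (sfl \<sigma>)(s := True), sen := (sen \<sigma>)(s := False),
      net := net \<sigma> + bcast (\<lambda>t. ChangeView t (Suc (scv \<sigma> s)))
                  + bcast (\<lambda>t. StateUpdate t s (sreg \<sigma> s) (scv \<sigma> s)) \<rparr>"

definition start_ph1 :: "('s::finite,'v,'c) st \<Rightarrow> 'c \<Rightarrow> ('s,'v,'c) st" where
  "start_ph1 \<sigma> c = \<sigma>\<lparr> cph := (cph \<sigma>)(c := 1), crid := (crid \<sigma>)(c := Suc (crid \<sigma> c)),
      crep := (crep \<sigma>)(c := {}),
      net := net \<sigma> + bcast (\<lambda>s. Req1 s c (Suc (crid \<sigma> c)) (ccv \<sigma> c)) \<rparr>"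

definition restart :: "('s::finite,'v,'c) st \<Rightarrow> 'c \<Rightarrow> nat \<Rightarrow> ('s,'v,'c) st" where
  "restart \<sigma> c x = start_ph1 (\<sigma>\<lparr> ccv := (ccv \<sigma>)(c := max (ccv \<sigma> c) x) \<rparr>) c"

definition start_ph2 :: "('s::finite,'v,'c) st \<Rightarrow> 'c \<Rightarrow> ('v,'c) reg \<Rightarrow> ('s,'v,'c) st" where
  "start_ph2 \<sigma> c r = \<sigma>\<lparr> cph := (cph \<sigma>)(c := 2), crid := (crid \<sigma>)(c := Suc (crid \<sigma> c)),
      crep := (crep \<sigma>)(c := {}), cwr := (cwr \<sigma>)(c := r),
      net := net \<sigma> + bcast (\<lambda>s. Req2 s c (Suc (crid \<sigma> c)) (ccv \<sigma> c) r) \<rparr>"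

definition cweight :: "('s,'v,'c) st \<Rightarrow> 'c \<Rightarrow> real" where
  "cweight \<sigma> c = (\<Sum>p\<in>crep \<sigma> c. fst (snd p))"

definition init_st :: "('v,'c) reg \<Rightarrow> ('v,'c) reg \<Rightarrow> ('s,'v,'c) st" where
  "init_st r0 r1 = \<lparr> scv = (\<lambda>_. 0), sreg = (\<lambda>_. r0), sen = (\<lambda>_. True), sfl = (\<lambda>_. False),
      ssu = (\<lambda>_ _. {}), crashed = {}, ccv = (\<lambda>_. 0), cop = (\<lambda>_. None), cph = (\<lambda>_. 1),
      crid = (\<lambda>_. 0), crep = (\<lambda>_. {}), cwr = (\<lambda>_. r1), net = {#} \<rparr>"

inductive step :: "nat \<Rightarrow> (nat \<Rightarrow> 's::finite \<Rightarrow> real)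
                   \<Rightarrow> ('s,'v,'c::linorder) st \<Rightarrow> ('s,'v,'c) st \<Rightarrow> bool"
  for f :: nat and w :: "nat \<Rightarrow> 's \<Rightarrow> real" where
  crash: "s \<notin> crashed \<sigma> \<Longrightarrow> card (insert s (crashed \<sigma>)) \<le> f \<Longrightarrow>
     step f w \<sigma> (\<sigma>\<lparr> crashed := insert s (crashed \<sigma>) \<rparr>)"
| timeout: "s \<notin> crashed \<sigma> \<Longrightarrow> \<not> sfl \<sigma> s \<Longrightarrow> step f w \<sigma> (handle_cv \<sigma> s)"
| recv_cv: "ChangeView s x \<in># net \<sigma> \<Longrightarrow> s \<notin> crashed \<sigma> \<Longrightarrow> x = Suc (scv \<sigma> s) \<Longrightarrow>
     \<not> sfl \<sigma> s \<Longrightarrow>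
     step f w \<sigma> (handle_cv (\<sigma>\<lparr> net := net \<sigma> - {#ChangeView s x#} \<rparr>) s)"
| recv_cv_ign: "ChangeView s x \<in># net \<sigma> \<Longrightarrow> s \<notin> crashed \<sigma> \<Longrightarrow>
     x \<le> scv \<sigma> s \<or> (x = Suc (scv \<sigma> s) \<and> sfl \<sigma> s) \<Longrightarrow>
     step f w \<sigma> (\<sigma>\<lparr> net := net \<sigma> - {#ChangeView s x#} \<rparr>)"
| recv_su: "StateUpdate s t r x \<in># net \<sigma> \<Longrightarrow> s \<notin> crashed \<sigma> \<Longrightarrow>
     step f w \<sigma> (\<sigma>\<lparr> net := net \<sigma> - {#StateUpdate s t r x#},
                     ssu := (ssu \<sigma>)(s := (ssu \<sigma> s)(x := insert (t, r) (ssu \<sigma> s x))) \<rparr>)"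
| install: "s \<notin> crashed \<sigma> \<Longrightarrow> sfl \<sigma> s \<Longrightarrow>
     (\<Sum>t\<in>fst ` ssu \<sigma> s (scv \<sigma> s). w (scv \<sigma> s) t) > real (card (UNIV :: 's set)) / 2 \<Longrightarrow>
     r \<in> snd ` ssu \<sigma> s (scv \<sigma> s) \<Longrightarrow>
     (\<forall>r'\<in>snd ` ssu \<sigma> s (scv \<sigma> s). key_le (key r') (key r)) \<Longrightarrow>
     step f w \<sigma> (\<sigma>\<lparr> sreg := (sreg \<sigma>)(s := r), scv := (scv \<sigma>)(s := Suc (scv \<sigma> s)),
                     sfl := (sfl \<sigma>)(s := False), sen := (sen \<sigma>)(s := True) \<rparr>)"
| recv_req1: "Req1 s c r x \<in># net \<sigma> \<Longrightarrow> s \<notin> crashed \<sigma> \<Longrightarrow> sen \<sigma> s \<Longrightarrow>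
     step f w \<sigma> (\<sigma>\<lparr> net := net \<sigma> - {#Req1 s c r x#}
        + {#Rep1 c s r (scv \<sigma> s) (if scv \<sigma> s = x then Some (w x s) else None) (sreg \<sigma> s)#} \<rparr>)"
| recv_req2: "Req2 s c r x rg \<in># net \<sigma> \<Longrightarrow> s \<notin> crashed \<sigma> \<Longrightarrow> sen \<sigma> s \<Longrightarrow>
     step f w \<sigma> (\<sigma>\<lparr> net := net \<sigma> - {#Req2 s c r x rg#}
        + {#Rep2 c s r (scv \<sigma> s) (if scv \<sigma> s = x then Some (w x s) else None)#},
        sreg := (sreg \<sigma>)(s := (if scv \<sigma> s = x \<and> key_less (key (sreg \<sigma> s)) (key rg)
                                 then rg else sreg \<sigma> s)) \<rparr>)"
| invoke: "cop \<sigma> c = None \<Longrightarrow>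
     step f w \<sigma> (start_ph1 (\<sigma>\<lparr> cop := (cop \<sigma>)(c := Some oper) \<rparr>) c)"
| rep1_coll: "Rep1 c s r x wo rg \<in># net \<sigma> \<Longrightarrow> cop \<sigma> c \<noteq> None \<Longrightarrow> cph \<sigma> c = 1 \<Longrightarrow>
     r = crid \<sigma> c \<Longrightarrow> x = ccv \<sigma> c \<Longrightarrow> wo = Some wt \<Longrightarrow>
     \<sigma>1 = \<sigma>\<lparr> net := net \<sigma> - {#Rep1 c s r x wo rg#},
              crep := (crep \<sigma>)(c := insert (s, wt, rg) (crep \<sigma> c)) \<rparr> \<Longrightarrow>
     \<not> (cweight \<sigma>1 c > real (card (UNIV :: 's set)) / 2) \<Longrightarrow>
     step f w \<sigma> \<sigma>1"
| rep1_fin: "Rep1 c s r x wo rg \<in># net \<sigma> \<Longrightarrow> cop \<sigma> c = Some oper \<Longrightarrow> cph \<sigma> c = 1 \<Longrightarrow>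
     r = crid \<sigma> c \<Longrightarrow> x = ccv \<sigma> c \<Longrightarrow> wo = Some wt \<Longrightarrow>
     \<sigma>1 = \<sigma>\<lparr> net := net \<sigma> - {#Rep1 c s r x wo rg#},
              crep := (crep \<sigma>)(c := insert (s, wt, rg) (crep \<sigma> c)) \<rparr> \<Longrightarrow>
     cweight \<sigma>1 c > real (card (UNIV :: 's set)) / 2 \<Longrightarrow>
     rm \<in> (\<lambda>p. snd (snd p)) ` crep \<sigma>1 c \<Longrightarrow>
     (\<forall>r'\<in>(\<lambda>p. snd (snd p)) ` crep \<sigma>1 c. key_le (key r') (key rm)) \<Longrightarrow>
     nr = (case oper of Read \<Rightarrow> rm | Write val \<Rightarrow> (val, Suc (fst (snd rm)), c)) \<Longrightarrow>
     step f w \<sigma> (start_ph2 \<sigma>1 c nr)"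
| rep1_view: "Rep1 c s r x wo rg \<in># net \<sigma> \<Longrightarrow> cop \<sigma> c \<noteq> None \<Longrightarrow> cph \<sigma> c = 1 \<Longrightarrow>
     r = crid \<sigma> c \<Longrightarrow> x \<noteq> ccv \<sigma> c \<Longrightarrow>
     step f w \<sigma> (restart (\<sigma>\<lparr> net := net \<sigma> - {#Rep1 c s r x wo rg#} \<rparr>) c x)"
| rep1_stale: "Rep1 c s r x wo rg \<in># net \<sigma> \<Longrightarrow> \<not> (cop \<sigma> c \<noteq> None \<and> cph \<sigma> c = 1 \<and> r = crid \<sigma> c) \<Longrightarrow>
     step f w \<sigma> (\<sigma>\<lparr> net := net \<sigma> - {#Rep1 c s r x wo rg#} \<rparr>)"
| rep2_coll: "Rep2 c s r x wo \<in># net \<sigma> \<Longrightarrow> cop \<sigma> c \<noteq> None \<Longrightarrow> cph \<sigma> c = 2 \<Longrightarrow>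
     r = crid \<sigma> c \<Longrightarrow> x = ccv \<sigma> c \<Longrightarrow> wo = Some wt \<Longrightarrow>
     \<sigma>1 = \<sigma>\<lparr> net := net \<sigma> - {#Rep2 c s r x wo#},
              crep := (crep \<sigma>)(c := insert (s, wt, cwr \<sigma> c) (crep \<sigma> c)) \<rparr> \<Longrightarrow>
     \<not> (cweight \<sigma>1 c > real (card (UNIV :: 's set)) / 2) \<Longrightarrow>
     step f w \<sigma> \<sigma>1"
| rep2_fin: "Rep2 c s r x wo \<in># net \<sigma> \<Longrightarrow> cop \<sigma> c \<noteq> None \<Longrightarrow> cph \<sigma> c = 2 \<Longrightarrow>
     r = crid \<sigma> c \<Longrightarrow> x = ccv \<sigma> c \<Longrightarrow> wo = Some wt \<Longrightarrow>
     \<sigma>1 = \<sigma>\<lparr> net := net \<sigma> - {#Rep2 c s r x wo#},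
              crep := (crep \<sigma>)(c := insert (s, wt, cwr \<sigma> c) (crep \<sigma> c)) \<rparr> \<Longrightarrow>
     cweight \<sigma>1 c > real (card (UNIV :: 's set)) / 2 \<Longrightarrow>
     step f w \<sigma> (\<sigma>1\<lparr> cop := (cop \<sigma>1)(c := None) \<rparr>)"
| rep2_view: "Rep2 c s r x wo \<in># net \<sigma> \<Longrightarrow> cop \<sigma> c \<noteq> None \<Longrightarrow> cph \<sigma> c = 2 \<Longrightarrow>
     r = crid \<sigma> c \<Longrightarrow> x \<noteq> ccv \<sigma> c \<Longrightarrow>
     step f w \<sigma> (restart (\<sigma>\<lparr> net := net \<sigma> - {#Rep2 c s r x wo#} \<rparr>) c x)"
| rep2_stale: "Rep2 c s r x wo \<in># net \<sigma> \<Longrightarrow> \<not> (cop \<sigma> c \<noteq> None \<and> cph \<sigma> c = 2 \<and> r = crid \<sigma> c) \<Longrightarrow>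
     step f w \<sigma> (\<sigma>\<lparr> net := net \<sigma> - {#Rep2 c s r x wo#} \<rparr>)"

text \<open>lastview: the last view installed in the system, i.e. the view some server installed
  (or v0) such that no server has a larger current view; since current views change only
  by installing the successor view, this is the largest current view of any server.\<close>
definition lastview :: "('s::finite,'v,'c) st \<Rightarrow> nat" where
  "lastview \<sigma> = Max (range (scv \<sigma>))"

definition execution :: "nat \<Rightarrow> (nat \<Rightarrow> 's::finite \<Rightarrow> real) \<Rightarrow> ('v,'c) reg \<Rightarrow> ('v,'c) reg
     \<Rightarrow> (nat \<Rightarrow> ('s,'v,'c::linorder) st) \<Rightarrow> nat \<Rightarrow> bool" where
  "execution f w r0 r1 \<sigma> N \<longleftrightarrow> \<sigma> 0 = init_st r0 r1 \<and> (\<forall>i<N. step f w (\<sigma> i) (\<sigma> (Suc i)))"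

end

theory Submission
  imports Defs
begin

text \<open>
  Suppose a client starts phase 2 of an operation in view x while some server already has a
  larger current view. A server installs x+1 only after receiving state_update messages for x
  from a weighted majority of x, and every sender had already uninstalled x; hence the servers
  that have uninstalled x form a weighted majority of x. Such a server never again answers
  with view x and a weight: while still in x its read/write operations are disabled, and
  afterwards its current view is larger. So all replies the client can collect in this phase
  come from a weighted minority of x, and the phase cannot finish.
\<close>

lemma in_bcast [simp]: "x \<in># bcast g \<longleftrightarrow> (\<exists>s. x = g s)"
  by (auto simp: bcast_def set_mset_sum)

lemma in_diff_single_neq [simp]: "x \<noteq> y \<Longrightarrow> x \<in># M - {#y#} \<longleftrightarrow> x \<in># M"
  by (auto simp: in_diff_count)

lemmas step_defs = handle_cv_def start_ph1_def start_ph2_def restart_def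

definition uninstalled :: "('s,'v,'c) st \<Rightarrow> nat \<Rightarrow> 's set" where
  "uninstalled \<sigma> v = {t. v < scv \<sigma> t \<or> (v = scv \<sigma> t \<and> sfl \<sigma> t)}"

lemma in_uninstalled [simp]: "t \<in> uninstalled \<sigma> v \<longleftrightarrow> v < scv \<sigma> t \<or> (v = scv \<sigma> t \<and> sfl \<sigma> t)"
  by (simp add: uninstalled_def)

lemma step_scv_mono: "step f w \<sigma> \<sigma>' \<Longrightarrow> scv \<sigma> s \<le> scv \<sigma>' s"
  by (induction rule: step.induct) (auto simp: step_defs)

lemma step_uninstalled_mono: "step f w \<sigma> \<sigma>' \<Longrightarrow> uninstalled \<sigma> v \<subseteq> uninstalled \<sigma>' v"
  by (induction rule: step.induct) (auto simp: step_defs)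

lemma step_crid_mono: "step f w \<sigma> \<sigma>' \<Longrightarrow> crid \<sigma> c \<le> crid \<sigma>' c"
  by (induction rule: step.induct) (auto simp: step_defs)

lemma weights_ok_pos:
  fixes w :: "nat \<Rightarrow> 's::finite \<Rightarrow> real"
  assumes "weights_ok f w"
  shows "0 < w v s"
proof -
  let ?n = "real (card (UNIV :: 's set))"
  have "2 * f + 1 \<le> card (UNIV :: 's set)" and lower: "?n / (2 * (?n - real f)) < w v s"
    using assms unfolding weights_ok_def by auto
  then have "0 \<le> ?n / (2 * (?n - real f))" by simp
  with lower show ?thesis by linarith
qed

lemma weights_ok_sum_mono: "weights_ok f w \<Longrightarrow> A \<subseteq> B \<Longrightarrow> sum (w v) A \<le> sum (w v) B"
  by (rule sum_mono2) (auto intro: less_imp_le weights_ok_pos)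

lemma weights_ok_majority_complement:
  fixes w :: "nat \<Rightarrow> 's::finite \<Rightarrow> real"
  assumes wok: "weights_ok f w" and majority: "real (card (UNIV :: 's set)) / 2 < sum (w v) B"
  shows "sum (w v) (- B) < real (card (UNIV :: 's set)) / 2"
proof -
  have "sum (w v) B + sum (w v) (- B) = sum (w v) UNIV"
    by (subst sum.union_disjoint[symmetric]) (auto simp: Un_commute)
  also have "\<dots> \<le> real (card (UNIV :: 's set))"
    using wok unfolding weights_ok_def by blast
  finally show ?thesis using majority by linarith
qed

lemma sum_replies_le_complement:
  fixes B :: "'s::finite set" and g :: "'s \<Rightarrow> real"
  assumes nonneg: "\<And>s. 0 \<le> g s"
    and replies: "\<And>p. p \<in> T \<Longrightarrow> fst (snd p) = g (fst p) \<and> snd (snd p) = r \<and> fst p \<notin> B"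
  shows "(\<Sum>p\<in>T. fst (snd p)) \<le> sum g (- B)"
proof -
  have "inj_on fst T"
    by (rule inj_onI) (metis replies prod.collapse)
  have "(\<Sum>p\<in>T. fst (snd p)) = (\<Sum>p\<in>T. g (fst p))"
    using replies by (intro sum.cong) auto
  also have "\<dots> = sum g (fst ` T)"
    by (rule sum.reindex[OF \<open>inj_on fst T\<close>, symmetric, unfolded comp_def])
  also have "\<dots> \<le> sum g (- B)"
    by (rule sum_mono2) (use replies nonneg in auto)
  finally show ?thesis .
qed

lemma last_entry_le:
  fixes P :: "nat \<Rightarrow> bool"
  assumes "\<not> P 0" and "P i"
  shows "\<exists>j. 0 < j \<and> j \<le> i \<and> \<not> P (j - 1) \<and> (\<forall>k\<in>{j..i}. P k)"
  using assms(2)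
proof (induction i)
  case 0
  with assms(1) show ?case by simp
next
  case (Suc i)
  show ?case
  proof (cases "P i")
    case True
    then obtain j where "0 < j" "j \<le> i" "\<not> P (j - 1)" "\<forall>k\<in>{j..i}. P k"
      using Suc.IH by blast
    then show ?thesis using Suc.prems by (intro exI[of _ j]) (auto simp: le_Suc_eq)
  next
    case False
    then show ?thesis using Suc.prems by (intro exI[of _ "Suc i"]) auto
  qed
qed

fun msg_consistent :: "('s,'v,'c) st \<Rightarrow> ('s,'v,'c) msg \<Rightarrow> bool" where
  "msg_consistent \<sigma> (StateUpdate d t r v) \<longleftrightarrow> t \<in> uninstalled \<sigma> v"
| "msg_consistent \<sigma> (Rep1 c s r v wo rg) \<longleftrightarrow> v \<le> scv \<sigma> s"
| "msg_consistent \<sigma> (Rep2 c s r v wo) \<longleftrightarrow> v \<le> scv \<sigma> s \<and> r \<le> crid \<sigma> c"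
| "msg_consistent \<sigma> (Req2 s c r v rg) \<longleftrightarrow> r \<le> crid \<sigma> c"
| "msg_consistent \<sigma> _ \<longleftrightarrow> True"

lemma step_msg_consistent:
  assumes st: "step f w \<sigma> \<sigma>'" and "msg_consistent \<sigma> m"
  shows "msg_consistent \<sigma>' m"
  using assms step_scv_mono[OF st] step_uninstalled_mono[OF st] step_crid_mono[OF st]
  by (cases m) (auto simp del: in_uninstalled intro: le_trans)

definition net_consistent :: "('s,'v,'c) st \<Rightarrow> bool" where
  "net_consistent \<sigma> \<longleftrightarrow> (\<forall>m. m \<in># net \<sigma> \<longrightarrow> msg_consistent \<sigma> m)"

definition uninstalling_disabled :: "('s,'v,'c) st \<Rightarrow> bool" where
  "uninstalling_disabled \<sigma> \<longleftrightarrow> (\<forall>t. sfl \<sigma> t \<longrightarrow> \<not> sen \<sigma> t)"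

definition state_updates_uninstalled :: "('s,'v,'c) st \<Rightarrow> bool" where
  "state_updates_uninstalled \<sigma> \<longleftrightarrow> (\<forall>s v t r. (t, r) \<in> ssu \<sigma> s v \<longrightarrow> t \<in> uninstalled \<sigma> v)"

definition uninstalled_majority :: "(nat \<Rightarrow> 's::finite \<Rightarrow> real) \<Rightarrow> ('s,'v,'c) st \<Rightarrow> bool" where
  "uninstalled_majority w \<sigma> \<longleftrightarrow>
     (\<forall>s v. v < scv \<sigma> s \<longrightarrow> real (card (UNIV :: 's set)) / 2 < sum (w v) (uninstalled \<sigma> v))"

definition client_views_bounded :: "('s,'v,'c) st \<Rightarrow> bool" where
  "client_views_bounded \<sigma> \<longleftrightarrow> (\<forall>c. \<exists>s. ccv \<sigma> c \<le> scv \<sigma> s)"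

definition reach_inv :: "(nat \<Rightarrow> 's::finite \<Rightarrow> real) \<Rightarrow> ('s,'v,'c) st \<Rightarrow> bool" where
  "reach_inv w \<sigma> \<longleftrightarrow> net_consistent \<sigma> \<and> uninstalling_disabled \<sigma> \<and> state_updates_uninstalled \<sigma>
     \<and> uninstalled_majority w \<sigma> \<and> client_views_bounded \<sigma>"

lemma reach_inv_init: "reach_inv w (init_st r0 r1)"
  by (simp add: reach_inv_def net_consistent_def uninstalling_disabled_def
      state_updates_uninstalled_def uninstalled_majority_def client_views_bounded_def init_st_def)

lemma step_net_consistent:
  assumes st: "step f w \<sigma> \<sigma>'" and inv: "net_consistent \<sigma>"
  shows "net_consistent \<sigma>'"
proof -
  have old: "\<And>m. m \<in># net \<sigma> \<Longrightarrow> msg_consistent \<sigma>' m"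
    using inv step_msg_consistent[OF st] unfolding net_consistent_def by blast
  from st show ?thesis
  proof cases
    case (recv_req2 s c r x rg)
    have "msg_consistent \<sigma> (Req2 s c r x rg)"
      using inv recv_req2 unfolding net_consistent_def by blast
    then show ?thesis
      using recv_req2 unfolding net_consistent_def
      by (auto dest: old old[OF in_diffD] simp del: in_uninstalled)
  qed (use old in \<open>auto simp: net_consistent_def step_defs dest!: in_diffD\<close>)
qed

lemma step_uninstalling_disabled:
  "step f w \<sigma> \<sigma>' \<Longrightarrow> uninstalling_disabled \<sigma> \<Longrightarrow> uninstalling_disabled \<sigma>'"
  by (induction rule: step.induct) (auto simp: uninstalling_disabled_def step_defs)

lemma step_state_updates_uninstalled:
  assumes st: "step f w \<sigma> \<sigma>'" and inv: "state_updates_uninstalled \<sigma>" and net: "net_consistent \<sigma>"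
  shows "state_updates_uninstalled \<sigma>'"
proof -
  have old: "\<And>s v t r. (t, r) \<in> ssu \<sigma> s v \<Longrightarrow> t \<in> uninstalled \<sigma>' v"
    using inv step_uninstalled_mono[OF st] unfolding state_updates_uninstalled_def by blast
  from st show ?thesis
  proof cases
    case (recv_su s t r x)
    have "t \<in> uninstalled \<sigma>' x"
      using net step_msg_consistent[OF st] recv_su(2) unfolding net_consistent_def by fastforce
    then show ?thesis
      using recv_su unfolding state_updates_uninstalled_def by (auto dest: old simp del: in_uninstalled)
  qed (auto simp: state_updates_uninstalled_def step_defs dest: old simp del: in_uninstalled)
qed

text \<open>The only interesting case is an installation: the state_update senders recorded by the
  installing server form a weighted majority and have all uninstalled its old view.\<close>
lemma step_uninstalled_majority:
  fixes \<sigma> \<sigma>' :: "('s::finite,'v,'c::linorder) st"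
  assumes st: "step f w \<sigma> \<sigma>'" and wok: "weights_ok f w"
    and inv: "uninstalled_majority w \<sigma>" and su: "state_updates_uninstalled \<sigma>"
  shows "uninstalled_majority w \<sigma>'"
proof -
  have mono: "\<And>v. uninstalled \<sigma> v \<subseteq> uninstalled \<sigma>' v"
    using step_uninstalled_mono[OF st] .
  have old: "\<And>s v. v < scv \<sigma> s \<Longrightarrow> real (card (UNIV :: 's set)) / 2 < sum (w v) (uninstalled \<sigma>' v)"
    using inv weights_ok_sum_mono[OF wok mono] unfolding uninstalled_majority_def
    by (meson less_le_trans)
  from st show ?thesis
  proof cases
    case (install s r)
    let ?v = "scv \<sigma> s"
    have "fst ` ssu \<sigma> s ?v \<subseteq> uninstalled \<sigma>' ?v"
      using su mono unfolding state_updates_uninstalled_def by force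
    then have "sum (w ?v) (fst ` ssu \<sigma> s ?v) \<le> sum (w ?v) (uninstalled \<sigma>' ?v)"
      by (rule weights_ok_sum_mono[OF wok])
    with install have new: "real (card (UNIV :: 's set)) / 2 < sum (w ?v) (uninstalled \<sigma>' ?v)"
      by linarith
    show ?thesis unfolding uninstalled_majority_def
    proof (intro allI impI)
      fix s' v assume "v < scv \<sigma>' s'"
      then have "v < scv \<sigma> s' \<or> v = ?v"
        using install by (auto split: if_splits)
      then show "real (card (UNIV :: 's set)) / 2 < sum (w v) (uninstalled \<sigma>' v)"
        using old new by blast
    qed
  qed (use old in \<open>auto simp: uninstalled_majority_def step_defs simp del: in_uninstalled\<close>)
qed

lemma step_client_views_bounded:
  assumes st: "step f w \<sigma> \<sigma>'" and inv: "client_views_bounded \<sigma>" and net: "net_consistent \<sigma>"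
  shows "client_views_bounded \<sigma>'"
proof -
  have old: "\<And>c. \<exists>s. ccv \<sigma> c \<le> scv \<sigma>' s"
    using inv step_scv_mono[OF st] unfolding client_views_bounded_def by (meson le_trans)
  have adopt: "client_views_bounded \<sigma>'"
    if ccv': "ccv \<sigma>' = (ccv \<sigma>)(c := max (ccv \<sigma> c) x)" and "x \<le> scv \<sigma> s" for c x s
    unfolding client_views_bounded_def
  proof
    fix c'
    have "x \<le> scv \<sigma>' s" using \<open>x \<le> scv \<sigma> s\<close> step_scv_mono[OF st] le_trans by blast
    then show "\<exists>s. ccv \<sigma>' c' \<le> scv \<sigma>' s"
      using old[of c'] ccv' by (cases "c' = c") (auto simp: max_def)
  qed
  from st show ?thesis
  proof cases
    case (rep1_view c s r x wo rg)
    then show ?thesis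
      using net adopt[of c x s] unfolding net_consistent_def by (fastforce simp: step_defs)
  next
    case (rep2_view c s r x wo)
    then show ?thesis
      using net adopt[of c x s] unfolding net_consistent_def by (fastforce simp: step_defs)
  qed (use old in \<open>auto simp: client_views_bounded_def step_defs\<close>)
qed

lemma step_reach_inv:
  assumes "step f w \<sigma> \<sigma>'" and "weights_ok f w" and "reach_inv w \<sigma>"
  shows "reach_inv w \<sigma>'"
  using assms step_net_consistent step_uninstalling_disabled step_state_updates_uninstalled
    step_uninstalled_majority step_client_views_bounded
  unfolding reach_inv_def by metis

lemma execution_step: "execution f w r0 r1 \<sigma> N \<Longrightarrow> k < N \<Longrightarrow> step f w (\<sigma> k) (\<sigma> (Suc k))"
  by (simp add: execution_def)

lemma execution_reach_inv:
  assumes exec: "execution f w r0 r1 \<sigma> N" and wok: "weights_ok f w" and "k \<le> N"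
  shows "reach_inv w (\<sigma> k)"
  using \<open>k \<le> N\<close>
proof (induction k)
  case 0
  then show ?case using exec reach_inv_init unfolding execution_def by simp
next
  case (Suc k)
  then show ?case using step_reach_inv[OF execution_step[OF exec] wok] by simp
qed

lemma lastview_gt_client_view:
  fixes \<sigma> :: "('s::finite,'v,'c) st"
  assumes "client_views_bounded \<sigma>" and "lastview \<sigma> \<noteq> ccv \<sigma> c"
  shows "\<exists>s. ccv \<sigma> c < scv \<sigma> s"
proof -
  have "lastview \<sigma> \<in> range (scv \<sigma>)" and "\<forall>s. scv \<sigma> s \<le> lastview \<sigma>"
    unfolding lastview_def by (auto intro: Max_in Max_ge)
  then show ?thesis
    using assms unfolding client_views_bounded_def by (metis imageE le_neq_trans)
qed

definition in_phase2 :: "'c \<Rightarrow> nat \<Rightarrow> ('s,'v,'c) st \<Rightarrow> bool" where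
  "in_phase2 c R \<sigma> \<longleftrightarrow> cop \<sigma> c \<noteq> None \<and> cph \<sigma> c = 2 \<and> crid \<sigma> c = R"

lemma step_finish_operation:
  fixes \<sigma> \<sigma>' :: "('s::finite,'v,'c::linorder) st"
  assumes st: "step f w \<sigma> \<sigma>'" and "cop \<sigma> c \<noteq> None" and "cop \<sigma>' c = None"
  shows "\<exists>s wt. Rep2 c s (crid \<sigma> c) (ccv \<sigma> c) (Some wt) \<in># net \<sigma> \<and> cph \<sigma> c = 2 \<and>
     real (card (UNIV :: 's set)) / 2 < (\<Sum>p\<in>insert (s, wt, cwr \<sigma> c) (crep \<sigma> c). fst (snd p))"
  using st
proof cases
  case (rep2_fin c' s r x wo wt \<sigma>1)
  then have "c' = c" using assms(2,3) by (cases "c' = c") auto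
  with rep2_fin show ?thesis by (auto simp: cweight_def)
qed (use assms(2,3) in \<open>auto simp: step_defs split: if_splits\<close>)

text \<open>Phase 2 is entered only by finishing phase 1, which draws a fresh request id; by
  consistency of the network no phase-2 reply carries it yet.\<close>
lemma step_enter_phase2:
  assumes st: "step f w \<sigma> \<sigma>'" and net: "net_consistent \<sigma>"
    and "\<not> in_phase2 c R \<sigma>" and "in_phase2 c R \<sigma>'"
  shows "crep \<sigma>' c = {} \<and> (\<forall>s v wo. Rep2 c s R v wo \<notin># net \<sigma>')"
proof -
  have unchanged: False
    if "cop \<sigma>' c = cop \<sigma> c" "cph \<sigma>' c = cph \<sigma> c" "crid \<sigma>' c = crid \<sigma> c"
    using that assms(3,4) unfolding in_phase2_def by simp
  from st show ?thesis
  proof cases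
    case (rep1_fin c' s r x wo rg oper wt \<sigma>1 rm nr)
    show ?thesis
    proof (cases "c' = c")
      case True
      have R: "R = Suc (crid \<sigma> c)"
        using assms(4) rep1_fin True by (simp add: in_phase2_def step_defs)
      have "Rep2 c s' R v wo' \<notin># net \<sigma>'" for s' v wo'
      proof
        assume "Rep2 c s' R v wo' \<in># net \<sigma>'"
        then have "Rep2 c s' R v wo' \<in># net \<sigma>"
          using rep1_fin by (auto simp: step_defs dest!: in_diffD)
        then show False using net R unfolding net_consistent_def by fastforce
      qed
      then show ?thesis using rep1_fin True by (simp add: step_defs)
    next
      case False
      then show ?thesis using rep1_fin unchanged by (simp add: step_defs)
    qed
  next
    case (invoke c' oper)
    then show ?thesis using unchanged assms(4) by (cases "c' = c") (auto simp: step_defs in_phase2_def)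
  next
    case (rep1_view c' s r x wo rg)
    then show ?thesis using unchanged assms(4) by (cases "c' = c") (auto simp: step_defs in_phase2_def)
  next
    case (rep2_view c' s r x wo)
    then show ?thesis using unchanged assms(4) by (cases "c' = c") (auto simp: step_defs in_phase2_def)
  next
    case (rep2_fin c' s r x wo wt \<sigma>1)
    then show ?thesis using unchanged assms(4) by (cases "c' = c") (auto simp: in_phase2_def)
  qed (use unchanged in \<open>auto simp: step_defs\<close>)
qed

lemma step_new_rep2:
  assumes "step f w \<sigma> \<sigma>'" and "Rep2 c s r x (Some wt) \<in># net \<sigma>'"
  shows "Rep2 c s r x (Some wt) \<in># net \<sigma> \<or> (scv \<sigma> s = x \<and> sen \<sigma> s \<and> wt = w x s)"
  using assms by (induction rule: step.induct) (auto simp: step_defs split: if_splits dest: in_diffD)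

lemma step_in_phase2:
  assumes "step f w \<sigma> \<sigma>'" and "in_phase2 c R \<sigma>" and "in_phase2 c R \<sigma>'"
  shows "ccv \<sigma>' c = ccv \<sigma> c \<and> cwr \<sigma>' c = cwr \<sigma> c \<and>
    (crep \<sigma>' c = crep \<sigma> c \<or> (\<exists>s wt. Rep2 c s R (ccv \<sigma> c) (Some wt) \<in># net \<sigma> \<and>
                                    crep \<sigma>' c = insert (s, wt, cwr \<sigma> c) (crep \<sigma> c)))"
  using assms by (induction rule: step.induct) (auto simp: step_defs in_phase2_def)

text \<open>B will be the set of servers that had uninstalled x when the phase started.\<close>
definition phase2_replies_outside ::
    "(nat \<Rightarrow> 's \<Rightarrow> real) \<Rightarrow> 'c \<Rightarrow> nat \<Rightarrow> nat \<Rightarrow> ('v,'c) reg \<Rightarrow> 's set \<Rightarrow> ('s,'v,'c) st \<Rightarrow> bool" where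
  "phase2_replies_outside w c R x r B \<sigma> \<longleftrightarrow> in_phase2 c R \<sigma> \<and> ccv \<sigma> c = x \<and> cwr \<sigma> c = r
     \<and> (\<forall>p\<in>crep \<sigma> c. fst (snd p) = w x (fst p) \<and> snd (snd p) = r \<and> fst p \<notin> B)
     \<and> (\<forall>s wt. Rep2 c s R x (Some wt) \<in># net \<sigma> \<longrightarrow> wt = w x s \<and> s \<notin> B)
     \<and> B \<subseteq> uninstalled \<sigma> x"

lemma step_phase2_replies_outside:
  assumes st: "step f w \<sigma> \<sigma>'" and dis: "uninstalling_disabled \<sigma>"
    and inv: "phase2_replies_outside w c R x r B \<sigma>" and ph': "in_phase2 c R \<sigma>'"
  shows "phase2_replies_outside w c R x r B \<sigma>'"
proof -
  have ph: "in_phase2 c R \<sigma>" and "ccv \<sigma> c = x" "cwr \<sigma> c = r"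
    and coll: "\<forall>p\<in>crep \<sigma> c. fst (snd p) = w x (fst p) \<and> snd (snd p) = r \<and> fst p \<notin> B"
    and net: "\<And>s wt. Rep2 c s R x (Some wt) \<in># net \<sigma> \<Longrightarrow> wt = w x s \<and> s \<notin> B"
    and B: "B \<subseteq> uninstalled \<sigma> x"
    using inv unfolding phase2_replies_outside_def by blast+
  have net': "wt = w x s \<and> s \<notin> B" if rep: "Rep2 c s R x (Some wt) \<in># net \<sigma>'" for s wt
  proof -
    consider "Rep2 c s R x (Some wt) \<in># net \<sigma>" | "scv \<sigma> s = x" "sen \<sigma> s" "wt = w x s"
      using step_new_rep2[OF st rep] by blast
    then show ?thesis
    proof cases
      case 1
      then show ?thesis by (rule net)
    next
      case 2
      then have "s \<notin> uninstalled \<sigma> x" using dis unfolding uninstalling_disabled_def by auto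
      with 2 B show ?thesis by blast
    qed
  qed
  have "ccv \<sigma>' c = x" "cwr \<sigma>' c = r"
    and "crep \<sigma>' c = crep \<sigma> c \<or> (\<exists>s wt. Rep2 c s R x (Some wt) \<in># net \<sigma> \<and>
                                         crep \<sigma>' c = insert (s, wt, r) (crep \<sigma> c))"
    using step_in_phase2[OF st ph ph'] \<open>ccv \<sigma> c = x\<close> \<open>cwr \<sigma> c = r\<close> by auto
  moreover from this(3) have "\<forall>p\<in>crep \<sigma>' c. fst (snd p) = w x (fst p) \<and> snd (snd p) = r \<and> fst p \<notin> B"
    using coll net by auto
  moreover have "B \<subseteq> uninstalled \<sigma>' x"
    using B step_uninstalled_mono[OF st] by blast
  ultimately show ?thesis
    using ph' net' unfolding phase2_replies_outside_def by blast
qed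

lemma execution_phase2_replies_outside:
  assumes exec: "execution f w r0 r1 \<sigma> N" and wok: "weights_ok f w" and "j \<le> i" and "i \<le> N"
    and phase: "\<forall>k\<in>{j..i}. in_phase2 c R (\<sigma> k)"
    and start: "crep (\<sigma> j) c = {}" "\<forall>s v wo. Rep2 c s R v wo \<notin># net (\<sigma> j)"
  shows "phase2_replies_outside w c R (ccv (\<sigma> j) c) (cwr (\<sigma> j) c)
           (uninstalled (\<sigma> j) (ccv (\<sigma> j) c)) (\<sigma> i)"
  using \<open>j \<le> i\<close> \<open>i \<le> N\<close> phase
proof (induction i)
  case 0
  then show ?case
    using start by (cases "j = 0") (auto simp: phase2_replies_outside_def)
next
  case (Suc i)
  show ?case
  proof (cases "j = Suc i")
    case True
    then show ?thesis
      using Suc.prems start by (auto simp: phase2_replies_outside_def)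
  next
    case False
    then have "j \<le> i" using Suc.prems(1) by simp
    have "reach_inv w (\<sigma> i)" using execution_reach_inv[OF exec wok] Suc.prems(2) by simp
    then show ?thesis
      using Suc exec \<open>j \<le> i\<close> step_phase2_replies_outside[of f w "\<sigma> i" "\<sigma> (Suc i)"]
      unfolding execution_def reach_inv_def by (auto simp: le_Suc_eq)
  qed
qed

lemma phase2_replies_outside_minority:
  fixes w :: "nat \<Rightarrow> 's::finite \<Rightarrow> real"
  assumes wok: "weights_ok f w" and inv: "phase2_replies_outside w c R x r B \<sigma>"
    and majority: "real (card (UNIV :: 's set)) / 2 < sum (w x) B"
    and "Rep2 c s R x (Some wt) \<in># net \<sigma>"
  shows "(\<Sum>p\<in>insert (s, wt, cwr \<sigma> c) (crep \<sigma> c). fst (snd p)) < real (card (UNIV :: 's set)) / 2"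
proof -
  have "(\<Sum>p\<in>insert (s, wt, cwr \<sigma> c) (crep \<sigma> c). fst (snd p)) \<le> sum (w x) (- B)"
    by (rule sum_replies_le_complement[where r = r])
       (use inv assms(4) weights_ok_pos[OF wok] in \<open>auto simp: phase2_replies_outside_def less_imp_le\<close>)
  also have "\<dots> < real (card (UNIV :: 's set)) / 2"
    using weights_ok_majority_complement[OF wok majority] .
  finally show ?thesis .
qed

lemma execution_phase2_entry:
  assumes exec: "execution f w r0 r1 \<sigma> N" and wok: "weights_ok f w" and "i \<le> N"
    and "in_phase2 c R (\<sigma> i)"
  obtains j where "j \<le> i" and "\<forall>k\<in>{j..i}. in_phase2 c R (\<sigma> k)"
    and "crep (\<sigma> j) c = {}" and "\<forall>s v wo. Rep2 c s R v wo \<notin># net (\<sigma> j)"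
proof -
  have "\<not> in_phase2 c R (\<sigma> 0)"
    using exec unfolding execution_def in_phase2_def init_st_def by simp
  then obtain j where "0 < j" "j \<le> i" and entry: "\<not> in_phase2 c R (\<sigma> (j - 1))"
    and phase: "\<forall>k\<in>{j..i}. in_phase2 c R (\<sigma> k)"
    using last_entry_le[of "\<lambda>k. in_phase2 c R (\<sigma> k)"] \<open>in_phase2 c R (\<sigma> i)\<close> by blast
  have "step f w (\<sigma> (j - 1)) (\<sigma> j)"
    using execution_step[OF exec, of "j - 1"] \<open>0 < j\<close> \<open>j \<le> i\<close> \<open>i \<le> N\<close> by simp
  moreover have "net_consistent (\<sigma> (j - 1))"
    using execution_reach_inv[OF exec wok, of "j - 1"] \<open>j \<le> i\<close> \<open>i \<le> N\<close>
    unfolding reach_inv_def by simp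
  moreover have "in_phase2 c R (\<sigma> j)" using phase \<open>j \<le> i\<close> by simp
  ultimately have "crep (\<sigma> j) c = {}" "\<forall>s v wo. Rep2 c s R v wo \<notin># net (\<sigma> j)"
    using step_enter_phase2 entry by blast+
  with that \<open>j \<le> i\<close> phase show ?thesis by blast
qed

lemma phase2_finish_started_in_lastview:
  fixes w :: "nat \<Rightarrow> 's::finite \<Rightarrow> real"
  assumes wok: "weights_ok f w" and inv: "reach_inv w \<sigma>\<^sub>0"
    and outside: "phase2_replies_outside w c R (ccv \<sigma>\<^sub>0 c) r (uninstalled \<sigma>\<^sub>0 (ccv \<sigma>\<^sub>0 c)) \<sigma>"
    and rep: "Rep2 c s R (ccv \<sigma>\<^sub>0 c) (Some wt) \<in># net \<sigma>"
    and finished: "real (card (UNIV :: 's set)) / 2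
                     < (\<Sum>p\<in>insert (s, wt, cwr \<sigma> c) (crep \<sigma> c). fst (snd p))"
  shows "lastview \<sigma>\<^sub>0 = ccv \<sigma>\<^sub>0 c"
proof (rule ccontr)
  assume "lastview \<sigma>\<^sub>0 \<noteq> ccv \<sigma>\<^sub>0 c"
  then obtain s' where "ccv \<sigma>\<^sub>0 c < scv \<sigma>\<^sub>0 s'"
    using lastview_gt_client_view[of \<sigma>\<^sub>0 c] inv unfolding reach_inv_def by blast
  then have "real (card (UNIV :: 's set)) / 2 < sum (w (ccv \<sigma>\<^sub>0 c)) (uninstalled \<sigma>\<^sub>0 (ccv \<sigma>\<^sub>0 c))"
    using inv unfolding reach_inv_def uninstalled_majority_def by blast
  from phase2_replies_outside_minority[OF wok outside this rep] finished
  show False by (rule less_asym)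
qed

theorem lemma8:
  fixes f :: nat and w :: "nat \<Rightarrow> 's::finite \<Rightarrow> real"
    and \<sigma> :: "nat \<Rightarrow> ('s, 'v, 'c::linorder) st"
  assumes "weights_ok f w"
    and "execution f w r0 r1 \<sigma> N"
    and "i < N"
    and "cop (\<sigma> i) c \<noteq> None" and "cop (\<sigma> (Suc i)) c = None"
  shows "\<exists>j\<le>i. (\<forall>k\<in>{j..i}. cop (\<sigma> k) c \<noteq> None \<and> cph (\<sigma> k) c = 2
                            \<and> crid (\<sigma> k) c = crid (\<sigma> i) c)
              \<and> lastview (\<sigma> j) = ccv (\<sigma> i) c"
proof -
  from step_finish_operation[OF execution_step[OF assms(2,3)] assms(4,5)] obtain s wt
    where rep: "Rep2 c s (crid (\<sigma> i) c) (ccv (\<sigma> i) c) (Some wt) \<in># net (\<sigma> i)"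
      and "cph (\<sigma> i) c = 2"
      and finished: "real (card (UNIV :: 's set)) / 2
                       < (\<Sum>p\<in>insert (s, wt, cwr (\<sigma> i) c) (crep (\<sigma> i) c). fst (snd p))"
    by blast
  then have "in_phase2 c (crid (\<sigma> i) c) (\<sigma> i)" using assms(4) unfolding in_phase2_def by simp
  with assms(1-3) obtain j where "j \<le> i" and phase: "\<forall>k\<in>{j..i}. in_phase2 c (crid (\<sigma> i) c) (\<sigma> k)"
    and start: "crep (\<sigma> j) c = {}" "\<forall>s v wo. Rep2 c s (crid (\<sigma> i) c) v wo \<notin># net (\<sigma> j)"
    by (elim execution_phase2_entry) auto
  have outside: "phase2_replies_outside w c (crid (\<sigma> i) c) (ccv (\<sigma> j) c) (cwr (\<sigma> j) c)
                        (uninstalled (\<sigma> j) (ccv (\<sigma> j) c)) (\<sigma> i)"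
    using execution_phase2_replies_outside[OF assms(2,1) \<open>j \<le> i\<close> _ phase start] assms(3) by simp
  then have same_view: "ccv (\<sigma> i) c = ccv (\<sigma> j) c"
    unfolding phase2_replies_outside_def by (elim conjE)
  have "reach_inv w (\<sigma> j)" using execution_reach_inv[OF assms(2,1)] assms(3) \<open>j \<le> i\<close> by simp
  from phase2_finish_started_in_lastview[OF assms(1) this outside rep[unfolded same_view] finished]
  have "lastview (\<sigma> j) = ccv (\<sigma> i) c" using same_view by simp
  with \<open>j \<le> i\<close> phase show ?thesis unfolding in_phase2_def by blast
qed

end
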